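(* Every subalgebra of a regular Lie algebra (finite-dimensional, over an infinite field $K$) is regular.
   Context: All algebras are finite-dimensional over an infinite field $K$. For $x\in L$ write $\chi_{\operatorname{ad} x}(t)=\det(t-\operatorname{ad}x)=\sum_{i}a_i(x)t^i$. The rank $\operatorname{rk}L$ is the minimal $r$ such that $a_r(x)\neq 0$ for some $x\in L$. An element $x$ is regular if $a_{\operatorname{rk}L}(x)\neq 0$. A Lie algebra is regular if each of its nonzero elements is regular. *)

theory Defs
  imports Main "Jordan_Normal_Form.Char_Poly"
begin

text \<open>A Lie algebra is modelled as a subset L of an ambient K-vector space
  (given by the scalar multiplication scale), with a bracket br.
  Everything is relativised to the carrier L.\<close>

definition fin_dim :: "('k::field \<Rightarrow> 'v::ab_group_add \<Rightarrow> 'v) \<Rightarrow> 'v set \<Rightarrow> bool" where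
  "fin_dim scale L \<longleftrightarrow> (\<exists>B. finite B \<and> B \<subseteq> L \<and> module.span scale B = L)"

definition lie_algebra ::
  "('k::field \<Rightarrow> 'v::ab_group_add \<Rightarrow> 'v) \<Rightarrow> ('v \<Rightarrow> 'v \<Rightarrow> 'v) \<Rightarrow> 'v set \<Rightarrow> bool" where
  "lie_algebra scale br L \<longleftrightarrow>
     module.subspace scale L \<and> fin_dim scale L \<and>
     (\<forall>x\<in>L. \<forall>y\<in>L. br x y \<in> L) \<and>
     (\<forall>x\<in>L. \<forall>y\<in>L. \<forall>z\<in>L. br (x + y) z = br x z + br y z) \<and>
     (\<forall>x\<in>L. \<forall>y\<in>L. \<forall>z\<in>L. br x (y + z) = br x y + br x z) \<and>
     (\<forall>c. \<forall>x\<in>L. \<forall>y\<in>L. br (scale c x) y = scale c (br x y)) \<and>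
     (\<forall>c. \<forall>x\<in>L. \<forall>y\<in>L. br x (scale c y) = scale c (br x y)) \<and>
     (\<forall>x\<in>L. br x x = 0) \<and>
     (\<forall>x\<in>L. \<forall>y\<in>L. \<forall>z\<in>L. br x (br y z) + br y (br z x) + br z (br x y) = 0)"

definition lie_subalgebra ::
  "('k::field \<Rightarrow> 'v::ab_group_add \<Rightarrow> 'v) \<Rightarrow> ('v \<Rightarrow> 'v \<Rightarrow> 'v) \<Rightarrow> 'v set \<Rightarrow> 'v set \<Rightarrow> bool" where
  "lie_subalgebra scale br S L \<longleftrightarrow>
     S \<subseteq> L \<and> module.subspace scale S \<and> (\<forall>x\<in>S. \<forall>y\<in>S. br x y \<in> S)"

definition some_basis :: "('k::field \<Rightarrow> 'v::ab_group_add \<Rightarrow> 'v) \<Rightarrow> 'v set \<Rightarrow> 'v list" where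
  "some_basis scale S = (SOME bs. distinct bs \<and> module.independent scale (set bs)
                                  \<and> module.span scale (set bs) = S)"

definition endo_matrix ::
  "('k::field \<Rightarrow> 'v::ab_group_add \<Rightarrow> 'v) \<Rightarrow> 'v set \<Rightarrow> ('v \<Rightarrow> 'v) \<Rightarrow> 'k mat" where
  "endo_matrix scale S f =
     (let bs = some_basis scale S
      in mat (length bs) (length bs)
           (\<lambda>(i, j). module.representation scale (set bs) (f (bs ! j)) (bs ! i)))"

definition chi_ad ::
  "('k::field \<Rightarrow> 'v::ab_group_add \<Rightarrow> 'v) \<Rightarrow> ('v \<Rightarrow> 'v \<Rightarrow> 'v) \<Rightarrow> 'v set \<Rightarrow> 'v \<Rightarrow> 'k poly" where
  "chi_ad scale br L x = char_poly (endo_matrix scale L (br x))"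

definition lie_rank ::
  "('k::field \<Rightarrow> 'v::ab_group_add \<Rightarrow> 'v) \<Rightarrow> ('v \<Rightarrow> 'v \<Rightarrow> 'v) \<Rightarrow> 'v set \<Rightarrow> nat" where
  "lie_rank scale br L = (LEAST r. \<exists>x\<in>L. coeff (chi_ad scale br L x) r \<noteq> 0)"

definition regular_element ::
  "('k::field \<Rightarrow> 'v::ab_group_add \<Rightarrow> 'v) \<Rightarrow> ('v \<Rightarrow> 'v \<Rightarrow> 'v) \<Rightarrow> 'v set \<Rightarrow> 'v \<Rightarrow> bool" where
  "regular_element scale br L x \<longleftrightarrow> coeff (chi_ad scale br L x) (lie_rank scale br L) \<noteq> 0"

definition regular_lie_algebra ::
  "('k::field \<Rightarrow> 'v::ab_group_add \<Rightarrow> 'v) \<Rightarrow> ('v \<Rightarrow> 'v \<Rightarrow> 'v) \<Rightarrow> 'v set \<Rightarrow> bool" where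
  "regular_lie_algebra scale br L \<longleftrightarrow> (\<forall>x\<in>L. x \<noteq> 0 \<longrightarrow> regular_element scale br L x)"

end

theory Submission
  imports Defs
begin

text \<open>Write \<open>ord p\<close> for the index of the lowest nonzero coefficient of \<open>p\<close> (its order at \<open>0\<close>), so
  \<open>rk L\<close> is the least \<open>ord \<chi>_L(x)\<close>. For \<open>x \<in> S\<close> the map \<open>ad x\<close> leaves \<open>S\<close> invariant, hence
  \<open>\<chi>_L(x) = \<chi>_S(x) \<chi>_{L/S}(x)\<close> and orders add. If \<open>y \<noteq> 0\<close> in \<open>S\<close> were not regular in \<open>S\<close>, pick \<open>x \<in> S\<close>
  with \<open>ord \<chi>_S(x) = rk S\<close> and put \<open>b = ord \<chi>_{L/S}(y)\<close>; regularity of \<open>y\<close> in \<open>L\<close> gives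
  \<open>rk L = ord \<chi>_S(y) + b > rk S + b\<close>. Along \<open>z(t) = (1 - t) x + t y\<close> the coefficient of index \<open>rk S\<close> of
  \<open>\<chi>_S(z(t))\<close> and that of index \<open>b\<close> of \<open>\<chi>_{L/S}(z(t))\<close> are polynomials in \<open>t\<close>, nonzero at \<open>t = 0\<close> and
  \<open>t = 1\<close> respectively. Over an infinite field some \<open>t\<close> makes both nonzero, and then
  \<open>ord \<chi>_L(z(t)) \<le> rk S + b < rk L\<close>, contradicting minimality of the rank.\<close>

definition ordered_basis :: "('k::field \<Rightarrow> 'v::ab_group_add \<Rightarrow> 'v) \<Rightarrow> 'v list \<Rightarrow> 'v set \<Rightarrow> bool" where
  "ordered_basis scale bs V \<longleftrightarrow>
     distinct bs \<and> module.independent scale (set bs) \<and> module.span scale (set bs) = V"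

definition linear_on :: "('k::field \<Rightarrow> 'v::ab_group_add \<Rightarrow> 'v) \<Rightarrow> 'v set \<Rightarrow> ('v \<Rightarrow> 'v) \<Rightarrow> bool" where
  "linear_on scale V f \<longleftrightarrow>
     (\<forall>u\<in>V. \<forall>w\<in>V. f (u + w) = f u + f w) \<and> (\<forall>c. \<forall>u\<in>V. f (scale c u) = scale c (f u))"

text \<open>For \<open>rs = cs = bs\<close> this is the matrix of \<open>f\<close>; for \<open>f = id\<close> it is a change-of-basis matrix.\<close>
definition coord_matrix ::
  "('k::field \<Rightarrow> 'v::ab_group_add \<Rightarrow> 'v) \<Rightarrow> 'v list \<Rightarrow> 'v list \<Rightarrow> 'v list \<Rightarrow> ('v \<Rightarrow> 'v) \<Rightarrow> 'k mat" where
  "coord_matrix scale bs rs cs f =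
     mat (length rs) (length cs) (\<lambda>(i, j). module.representation scale (set bs) (f (cs ! j)) (rs ! i))"

lemma dim_coord_matrix [simp]:
  "dim_row (coord_matrix scale bs rs cs f) = length rs" "dim_col (coord_matrix scale bs rs cs f) = length cs"
  by (simp_all add: coord_matrix_def)

lemma coord_matrix_carrier [simp]: "coord_matrix scale bs rs cs f \<in> carrier_mat (length rs) (length cs)"
  by (simp add: carrier_matI)

definition complement_basis :: "('k::field \<Rightarrow> 'v::ab_group_add \<Rightarrow> 'v) \<Rightarrow> 'v list \<Rightarrow> 'v set \<Rightarrow> 'v list" where
  "complement_basis scale bs V = (SOME es. ordered_basis scale (bs @ es) V)"

lemma char_poly_four_block_lower_zero:
  fixes A :: "'a::idom mat"
  assumes A: "A \<in> carrier_mat m m" and B: "B \<in> carrier_mat m d" and D: "D \<in> carrier_mat d d"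
  shows "char_poly (four_block_mat A B (0\<^sub>m d m) D) = char_poly A * char_poly D"
proof -
  have "char_poly_matrix (four_block_mat A B (0\<^sub>m d m) D) =
      four_block_mat (char_poly_matrix A) (map_mat (\<lambda>a. [:-a:]) B) (0\<^sub>m d m) (char_poly_matrix D)"
    using A B D by (intro eq_matI) (auto simp: char_poly_matrix_def)
  then show ?thesis
    unfolding char_poly_def using A B D by (simp add: det_four_block_mat_lower_left_zero[of _ m _ d])
qed

lemma coeff_char_poly_affine_combination:
  fixes A B :: "'a::field mat"
  assumes A: "A \<in> carrier_mat n n" and B: "B \<in> carrier_mat n n"
  shows "\<exists>p. \<forall>t. coeff (char_poly ((1 - t) \<cdot>\<^sub>m A + t \<cdot>\<^sub>m B)) k = poly p t"
proof (intro exI allI)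
  fix t :: 'a
  let ?N = "mat n n (\<lambda>ij. [:A $$ ij, B $$ ij - A $$ ij:])"
  have "map_mat (\<lambda>p. poly p t) ?N = (1 - t) \<cdot>\<^sub>m A + t \<cdot>\<^sub>m B"
    using A B by (intro eq_matI) (auto simp: algebra_simps)
  then have "char_poly ((1 - t) \<cdot>\<^sub>m A + t \<cdot>\<^sub>m B) = map_poly (\<lambda>p. poly p t) (char_poly ?N)"
    using comm_ring_hom.char_poly_hom[OF poly_hom.comm_ring_hom_axioms, of ?N n t] by simp
  then show "coeff (char_poly ((1 - t) \<cdot>\<^sub>m A + t \<cdot>\<^sub>m B)) k = poly (coeff (char_poly ?N) k) t"
    by (simp add: coeff_map_poly)
qed

lemma order_0_le_coeff_nonzero:
  fixes p :: "'a::idom poly"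
  assumes "coeff p k \<noteq> 0"
  shows "order 0 p \<le> k"
  using assms monom_1_dvd_iff[of p "Suc k"] monom_1_dvd_iff'[of "Suc k" p] by fastforce

lemma coeff_order_0_nonzero:
  fixes p :: "'a::idom poly"
  assumes "p \<noteq> 0"
  shows "coeff p (order 0 p) \<noteq> 0"
proof -
  have "\<not> monom 1 (Suc (order 0 p)) dvd p" using monom_1_dvd_iff[OF assms] by simp
  then obtain k where "k < Suc (order 0 p)" "coeff p k \<noteq> 0" unfolding monom_1_dvd_iff' by blast
  with order_0_le_coeff_nonzero show ?thesis by (metis le_antisym less_Suc_eq_le)
qed

lemma ex_common_nonroot:
  fixes p q :: "'a::idom poly"
  assumes "infinite (UNIV :: 'a set)" "poly p a \<noteq> 0" "poly q b \<noteq> 0"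
  shows "\<exists>t. poly p t \<noteq> 0 \<and> poly q t \<noteq> 0"
proof -
  have "p * q \<noteq> 0" using assms(2,3) by auto
  then have "finite {t. poly (p * q) t = 0}" by (rule poly_roots_finite)
  with assms(1) obtain t where "t \<notin> {t. poly (p * q) t = 0}" using ex_new_if_finite by blast
  then show ?thesis by auto
qed

context vector_space
begin

lemma ordered_basis_subspace: "ordered_basis scale bs V \<Longrightarrow> subspace V"
  unfolding ordered_basis_def by (auto simp: subspace_span)

lemma ordered_basis_nth_mem: "ordered_basis scale bs V \<Longrightarrow> k < length bs \<Longrightarrow> bs ! k \<in> V"
  unfolding ordered_basis_def by (auto intro: span_base)

lemma ordered_basis_length_eq:
  assumes "ordered_basis scale bs V" "ordered_basis scale cs V"
  shows "length bs = length cs"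
proof -
  have "card (set bs) = dim V"
    using assms(1) unfolding ordered_basis_def by (intro basis_card_eq_dim) (auto intro: span_base)
  moreover have "card (set cs) = dim V"
    using assms(2) unfolding ordered_basis_def by (intro basis_card_eq_dim) (auto intro: span_base)
  ultimately show ?thesis
    using assms by (auto simp: ordered_basis_def distinct_card)
qed

lemma representation_nth:
  assumes "ordered_basis scale bs V" "i < length bs" "j < length bs"
  shows "representation (set bs) (bs ! j) (bs ! i) = (if i = j then 1 else 0)"
  using assms representation_basis[of "set bs" "bs ! j"] nth_eq_iff_index_eq[of bs i j]
  unfolding ordered_basis_def by auto

lemma sum_representation_nth:
  assumes "ordered_basis scale bs V" "v \<in> V"
  shows "(\<Sum>k<length bs. representation (set bs) v (bs ! k) *s bs ! k) = v"
proof -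
  have "(\<Sum>k<length bs. representation (set bs) v (bs ! k) *s bs ! k) =
        (\<Sum>b\<in>set bs. representation (set bs) v b *s b)"
    using assms(1) unfolding ordered_basis_def
    by (intro sum.reindex_bij_betw bij_betw_nth) auto
  also have "\<dots> = v"
    using assms unfolding ordered_basis_def by (intro sum_representation_eq) auto
  finally show ?thesis .
qed

lemma linear_on_sum:
  assumes f: "linear_on scale V f" and V: "subspace V" and "finite I" "\<And>k. k \<in> I \<Longrightarrow> u k \<in> V"
  shows "f (\<Sum>k\<in>I. a k *s u k) = (\<Sum>k\<in>I. a k *s f (u k))"
  using assms(3,4)
proof (induction I rule: finite_induct)
  case empty
  have "f 0 = f (0 *s 0)" by simp
  also have "\<dots> = 0 *s f 0" using f subspace_0[OF V] unfolding linear_on_def by blast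
  finally show ?case by simp
next
  case (insert k I)
  have "(\<Sum>k\<in>I. a k *s u k) \<in> V" "a k *s u k \<in> V"
    using insert V by (auto intro: subspace_sum subspace_scale)
  with insert f show ?case unfolding linear_on_def by auto
qed

lemma representation_linear_image:
  assumes cs: "ordered_basis scale cs V" and B: "independent B"
    and g: "linear_on scale V g" "g ` V \<subseteq> span B" and v: "v \<in> V"
  shows "representation B (g v) b =
    (\<Sum>k<length cs. representation (set cs) v (cs ! k) * representation B (g (cs ! k)) b)"
proof -
  have gcs: "g (cs ! k) \<in> span B" if "k < length cs" for k
    using g(2) ordered_basis_nth_mem[OF cs that] by auto
  have "g v = g (\<Sum>k<length cs. representation (set cs) v (cs ! k) *s cs ! k)"
    using sum_representation_nth[OF cs v] by simp
  also have "\<dots> = (\<Sum>k<length cs. representation (set cs) v (cs ! k) *s g (cs ! k))"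
    by (rule linear_on_sum[OF g(1) ordered_basis_subspace[OF cs]]) (auto intro: ordered_basis_nth_mem[OF cs])
  finally have "representation B (g v) b =
      representation B (\<Sum>k<length cs. representation (set cs) v (cs ! k) *s g (cs ! k)) b"
    by simp
  also have "\<dots> = (\<Sum>k<length cs. representation B (representation (set cs) v (cs ! k) *s g (cs ! k)) b)"
    by (subst representation_sum[OF B]) (auto intro: span_scale gcs)
  also have "\<dots> = (\<Sum>k<length cs. representation (set cs) v (cs ! k) * representation B (g (cs ! k)) b)"
    by (simp add: representation_scale[OF B gcs])
  finally show ?thesis .
qed

lemma coord_matrix_mult:
  assumes B: "independent (set bs)" and cs: "ordered_basis scale cs V"
    and g: "linear_on scale V g" "g ` V \<subseteq> span (set bs)" and f: "f ` set ds \<subseteq> V"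
  shows "coord_matrix scale bs rs cs g * coord_matrix scale cs cs ds f = coord_matrix scale bs rs ds (g \<circ> f)"
proof (rule eq_matI)
  fix i j
  assume "i < dim_row (coord_matrix scale bs rs ds (g \<circ> f))" "j < dim_col (coord_matrix scale bs rs ds (g \<circ> f))"
  then have i: "i < length rs" and j: "j < length ds" by auto
  have "f (ds ! j) \<in> V" using f j by auto
  then show "(coord_matrix scale bs rs cs g * coord_matrix scale cs cs ds f) $$ (i, j) =
      coord_matrix scale bs rs ds (g \<circ> f) $$ (i, j)"
    using i j representation_linear_image[OF cs B g]
    by (simp add: coord_matrix_def scalar_prod_def lessThan_atLeast0 mult.commute)
qed auto

lemma coord_matrix_id:
  assumes "ordered_basis scale bs V"
  shows "coord_matrix scale bs bs bs id = 1\<^sub>m (length bs)"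
  by (rule eq_matI) (auto simp: coord_matrix_def representation_nth[OF assms])

lemma char_poly_coord_matrix_basis_change:
  assumes bs: "ordered_basis scale bs V" and cs: "ordered_basis scale cs V"
    and f: "linear_on scale V f" "f ` V \<subseteq> V"
  shows "char_poly (coord_matrix scale bs bs bs f) = char_poly (coord_matrix scale cs cs cs f)"
proof (rule char_poly_similar)
  let ?n = "length bs" and ?P = "coord_matrix scale bs bs cs id" and ?Q = "coord_matrix scale cs cs bs id"
  have l: "length cs = ?n" using ordered_basis_length_eq[OF bs cs] by simp
  have ib: "independent (set bs)" and ic: "independent (set cs)"
    using bs cs unfolding ordered_basis_def by auto
  have sb: "span (set bs) = V" and sc: "span (set cs) = V"
    using bs cs unfolding ordered_basis_def by auto
  have bV: "set bs \<subseteq> V" and cV: "set cs \<subseteq> V"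
    using bs cs unfolding ordered_basis_def by (auto intro: span_base)
  have fcV: "f ` set cs \<subseteq> V" using f(2) cV by auto
  have id: "linear_on scale V id" unfolding linear_on_def by simp
  have "?P * ?Q = coord_matrix scale bs bs bs id"
    using coord_matrix_mult[OF ib cs id] sb bV by simp
  then have PQ: "?P * ?Q = 1\<^sub>m ?n" using coord_matrix_id[OF bs] by simp
  have "?Q * ?P = coord_matrix scale cs cs cs id"
    using coord_matrix_mult[OF ic bs id] sc cV by simp
  then have QP: "?Q * ?P = 1\<^sub>m ?n" using coord_matrix_id[OF cs] l by simp
  have C: "coord_matrix scale bs bs bs f \<in> carrier_mat ?n ?n" "?P \<in> carrier_mat ?n ?n" "?Q \<in> carrier_mat ?n ?n"
    using l by auto
  have "coord_matrix scale bs bs bs f * ?P = coord_matrix scale bs bs cs f"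
    using coord_matrix_mult[OF ib bs f(1), where ds=cs and f=id] f(2) sb cV by simp
  also have "\<dots> = ?P * coord_matrix scale cs cs cs f"
    using coord_matrix_mult[OF ib cs id _ fcV] sb by simp
  finally have MP: "coord_matrix scale bs bs bs f * ?P = ?P * coord_matrix scale cs cs cs f" .
  have "coord_matrix scale bs bs bs f = coord_matrix scale bs bs bs f * (?P * ?Q)"
    using PQ C by simp
  also have "\<dots> = coord_matrix scale bs bs bs f * ?P * ?Q"
    by (rule assoc_mult_mat[symmetric, OF C])
  also have "\<dots> = ?P * coord_matrix scale cs cs cs f * ?Q"
    by (simp add: MP)
  finally have "coord_matrix scale bs bs bs f = ?P * coord_matrix scale cs cs cs f * ?Q" .
  then show "similar_mat (coord_matrix scale bs bs bs f) (coord_matrix scale cs cs cs f)"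
    unfolding similar_mat_def similar_mat_wit_def Let_def using PQ QP l
    by (intro exI[of _ ?P] exI[of _ ?Q]) auto
qed

lemma coord_matrix_invariant_subspace:
  assumes c: "ordered_basis scale (bs @ es) V" and b: "ordered_basis scale bs W" and f: "f ` W \<subseteq> W"
  shows "coord_matrix scale (bs @ es) (bs @ es) (bs @ es) f =
    four_block_mat (coord_matrix scale bs bs bs f) (coord_matrix scale (bs @ es) bs es f)
      (0\<^sub>m (length es) (length bs)) (coord_matrix scale (bs @ es) es es f)"
    (is "?M = ?B")
proof (rule eq_matI)
  have ic: "independent (set (bs @ es))" and disj: "set bs \<inter> set es = {}" and sb: "span (set bs) = W"
    using c b unfolding ordered_basis_def by auto
  fix i j assume "i < dim_row ?B" "j < dim_col ?B"
  then have i: "i < length bs + length es" and j: "j < length bs + length es" by auto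
  show "?M $$ (i, j) = ?B $$ (i, j)"
  proof (cases "j < length bs")
    case True
    have "f (bs ! j) \<in> span (set bs)" using f ordered_basis_nth_mem[OF b True] sb by auto
    then have rep: "representation (set (bs @ es)) (f (bs ! j)) = representation (set bs) (f (bs ! j))"
      using ic by (intro representation_extend) auto
    have "es ! (i - length bs) \<notin> set bs" if "\<not> i < length bs"
      using that i disj nth_mem[of "i - length bs" es] by auto
    then show ?thesis
      using i j True rep representation_ne_zero[of "set bs" "f (bs ! j)"]
      by (auto simp: coord_matrix_def nth_append)
  next
    case False
    then show ?thesis using i j by (auto simp: coord_matrix_def nth_append)
  qed
qed auto

lemma char_poly_coord_matrix_invariant_subspace:
  assumes "ordered_basis scale (bs @ es) V" "ordered_basis scale bs W" "f ` W \<subseteq> W"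
  shows "char_poly (coord_matrix scale (bs @ es) (bs @ es) (bs @ es) f) =
    char_poly (coord_matrix scale bs bs bs f) * char_poly (coord_matrix scale (bs @ es) es es f)"
  by (simp add: coord_matrix_invariant_subspace[OF assms] char_poly_four_block_lower_zero)

lemma coord_matrix_lincomb:
  assumes B: "independent (set bs)"
    and fg: "\<And>v. v \<in> set cs \<Longrightarrow> f v \<in> span (set bs) \<and> g v \<in> span (set bs)"
    and h: "\<And>v. v \<in> set cs \<Longrightarrow> h v = a *s f v + c *s g v"
  shows "coord_matrix scale bs rs cs h =
    a \<cdot>\<^sub>m coord_matrix scale bs rs cs f + c \<cdot>\<^sub>m coord_matrix scale bs rs cs g"
proof (rule eq_matI)
  fix i j assume "i < dim_row (a \<cdot>\<^sub>m coord_matrix scale bs rs cs f + c \<cdot>\<^sub>m coord_matrix scale bs rs cs g)"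
    "j < dim_col (a \<cdot>\<^sub>m coord_matrix scale bs rs cs f + c \<cdot>\<^sub>m coord_matrix scale bs rs cs g)"
  then have i: "i < length rs" and j: "j < length cs" by auto
  then have "cs ! j \<in> set cs" by simp
  with fg h show "coord_matrix scale bs rs cs h $$ (i, j) =
      (a \<cdot>\<^sub>m coord_matrix scale bs rs cs f + c \<cdot>\<^sub>m coord_matrix scale bs rs cs g) $$ (i, j)"
    using i j by (simp add: coord_matrix_def representation_add[OF B] representation_scale[OF B] span_scale)
qed auto

lemma fin_dim_independent_finite:
  assumes "fin_dim scale L" "independent B" "B \<subseteq> L"
  shows "finite B"
proof -
  obtain B0 where "finite B0" "span B0 = L" using assms(1) unfolding fin_dim_def by auto
  then show ?thesis using independent_span_bound assms(2,3) by auto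
qed

lemma ordered_basis_extend:
  assumes bs: "ordered_basis scale bs W" and "W \<subseteq> V" "subspace V" "V \<subseteq> L" "fin_dim scale L"
  shows "\<exists>es. ordered_basis scale (bs @ es) V"
proof -
  have "set bs \<subseteq> V" "independent (set bs)"
    using bs assms(2) unfolding ordered_basis_def by (auto intro: span_base)
  then obtain B where B: "set bs \<subseteq> B" "B \<subseteq> V" "independent B" "V \<subseteq> span B"
    by (rule maximal_independent_subset_extend)
  have "finite B" using fin_dim_independent_finite[OF assms(5) B(3)] B(2) assms(4) by auto
  then obtain es where es: "set es = B - set bs" "distinct es"
    using finite_distinct_list[of "B - set bs"] by auto
  have "span B = V" using B assms(3) by (intro span_subspace) auto
  then have "ordered_basis scale (bs @ es) V"
    using es B bs unfolding ordered_basis_def by (auto simp: Un_absorb1)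
  then show ?thesis ..
qed

lemma ordered_basis_complement_basis:
  assumes "ordered_basis scale bs W" "W \<subseteq> V" "subspace V" "fin_dim scale V"
  shows "ordered_basis scale (bs @ complement_basis scale bs V) V"
  unfolding complement_basis_def using ordered_basis_extend[OF assms(1-3) order_refl assms(4)] by (rule someI_ex)

lemma some_basis_ordered_basis:
  assumes "subspace V" "V \<subseteq> L" "fin_dim scale L"
  shows "ordered_basis scale (some_basis scale V) V"
proof -
  have "ordered_basis scale [] (span {})" unfolding ordered_basis_def by (simp add: independent_empty)
  moreover have "span {} \<subseteq> V" using assms(1) by (simp add: span_empty subspace_0)
  ultimately obtain es where "ordered_basis scale ([] @ es) V"
    using ordered_basis_extend[OF _ _ assms] by blast
  then show ?thesis unfolding some_basis_def ordered_basis_def by (rule someI)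
qed

end

lemma chi_ad_nonzero: "chi_ad scale br L x \<noteq> 0"
proof -
  let ?A = "endo_matrix scale L (br x)" and ?n = "length (some_basis scale L)"
  have "?A \<in> carrier_mat ?n ?n"
    unfolding endo_matrix_def Let_def by (rule mat_carrier)
  then have "coeff (char_poly ?A) ?n = 1" by (rule degree_monic_char_poly[THEN conjunct2])
  then show ?thesis unfolding chi_ad_def by auto
qed

lemma lie_rank_le_order:
  assumes "x \<in> L"
  shows "lie_rank scale br L \<le> order 0 (chi_ad scale br L x)"
  unfolding lie_rank_def using assms coeff_order_0_nonzero[OF chi_ad_nonzero] by (blast intro: Least_le)

lemma regular_element_iff_order:
  assumes "x \<in> L"
  shows "regular_element scale br L x \<longleftrightarrow> order 0 (chi_ad scale br L x) = lie_rank scale br L"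
proof
  assume "regular_element scale br L x"
  then have "order 0 (chi_ad scale br L x) \<le> lie_rank scale br L"
    unfolding regular_element_def by (rule order_0_le_coeff_nonzero)
  moreover have "lie_rank scale br L \<le> order 0 (chi_ad scale br L x)"
    by (rule lie_rank_le_order[OF assms])
  ultimately show "order 0 (chi_ad scale br L x) = lie_rank scale br L" by simp
next
  assume "order 0 (chi_ad scale br L x) = lie_rank scale br L"
  then show "regular_element scale br L x"
    using coeff_order_0_nonzero[OF chi_ad_nonzero, of scale br L x] unfolding regular_element_def by simp
qed

lemma lie_rank_attained:
  assumes "x \<in> L"
  obtains y where "y \<in> L" "order 0 (chi_ad scale br L y) = lie_rank scale br L"
proof -
  have "\<exists>r. \<exists>y\<in>L. coeff (chi_ad scale br L y) r \<noteq> 0"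
    using assms coeff_order_0_nonzero[OF chi_ad_nonzero] by blast
  from LeastI_ex[OF this] obtain y where "y \<in> L" "coeff (chi_ad scale br L y) (lie_rank scale br L) \<noteq> 0"
    unfolding lie_rank_def by blast
  then have "y \<in> L" "regular_element scale br L y" unfolding regular_element_def by auto
  with regular_element_iff_order that show ?thesis by blast
qed

lemma lie_algebra_linear_on:
  assumes "lie_algebra scale br L" "x \<in> L" "V \<subseteq> L"
  shows "linear_on scale V (br x)"
  using assms unfolding lie_algebra_def linear_on_def by blast

lemma lie_subalgebra_refl: "lie_algebra scale br L \<Longrightarrow> lie_subalgebra scale br L L"
  unfolding lie_algebra_def lie_subalgebra_def by auto

text \<open>The characteristic polynomial of the map induced by \<open>ad x\<close> on \<open>L / S\<close>: the complement vectors
  of a basis of \<open>L\<close> extending one of \<open>S\<close> represent a basis of the quotient.\<close>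
definition chi_ad_quotient ::
  "('k::field \<Rightarrow> 'v::ab_group_add \<Rightarrow> 'v) \<Rightarrow> ('v \<Rightarrow> 'v \<Rightarrow> 'v) \<Rightarrow> 'v set \<Rightarrow> 'v set \<Rightarrow> 'v \<Rightarrow> 'k poly" where
  "chi_ad_quotient scale br L S x =
     (let bs = some_basis scale S; es = complement_basis scale bs L
      in char_poly (coord_matrix scale (bs @ es) es es (br x)))"

context vector_space
begin

lemma chi_ad_eq_coord_matrix:
  assumes la: "lie_algebra scale br L" and sa: "lie_subalgebra scale br S L"
    and bs: "ordered_basis scale bs S" and x: "x \<in> S"
  shows "chi_ad scale br S x = char_poly (coord_matrix scale bs bs bs (br x))"
proof -
  have S: "subspace S" "S \<subseteq> L" and ad: "br x ` S \<subseteq> S" using sa x unfolding lie_subalgebra_def by auto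
  have lin: "linear_on scale S (br x)" using lie_algebra_linear_on[OF la _ S(2)] x S(2) by blast
  have "fin_dim scale L" using la unfolding lie_algebra_def by simp
  with S have sb: "ordered_basis scale (some_basis scale S) S" (is "ordered_basis scale ?sb S")
    by (rule some_basis_ordered_basis)
  have "chi_ad scale br S x = char_poly (coord_matrix scale ?sb ?sb ?sb (br x))"
    unfolding chi_ad_def endo_matrix_def coord_matrix_def Let_def ..
  also have "\<dots> = char_poly (coord_matrix scale bs bs bs (br x))"
    by (rule char_poly_coord_matrix_basis_change[OF sb bs lin ad])
  finally show ?thesis .
qed

lemma coeff_char_poly_ad_line:
  assumes la: "lie_algebra scale br L" and B: "independent (set bs)" and cs: "set cs \<subseteq> L"
    and rs: "length rs = length cs" and x: "x \<in> L" and y: "y \<in> L"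
    and span: "\<And>v. v \<in> set cs \<Longrightarrow> br x v \<in> span (set bs) \<and> br y v \<in> span (set bs)"
  shows "\<exists>p. \<forall>t. coeff (char_poly (coord_matrix scale bs rs cs (br ((1 - t) *s x + t *s y)))) k = poly p t"
proof -
  have L: "subspace L" using la unfolding lie_algebra_def by simp
  have line: "coord_matrix scale bs rs cs (br ((1 - t) *s x + t *s y)) =
      (1 - t) \<cdot>\<^sub>m coord_matrix scale bs rs cs (br x) + t \<cdot>\<^sub>m coord_matrix scale bs rs cs (br y)" for t
  proof (rule coord_matrix_lincomb[OF B span])
    fix v assume "v \<in> set cs"
    moreover have "(1 - t) *s x \<in> L" "t *s y \<in> L" using L x y by (auto intro: subspace_scale)
    ultimately show "br ((1 - t) *s x + t *s y) v = (1 - t) *s br x v + t *s br y v"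
      using la x y cs unfolding lie_algebra_def by auto
  qed
  have "coord_matrix scale bs rs cs (br z) \<in> carrier_mat (length cs) (length cs)" for z
    using rs coord_matrix_carrier by metis
  then show ?thesis
    unfolding line by (intro coeff_char_poly_affine_combination)
qed

lemma coeff_chi_ad_line:
  assumes la: "lie_algebra scale br L" and sa: "lie_subalgebra scale br S L" and x: "x \<in> S" and y: "y \<in> S"
  shows "\<exists>p. \<forall>t. coeff (chi_ad scale br S ((1 - t) *s x + t *s y)) k = poly p t"
proof -
  have S: "subspace S" "S \<subseteq> L" and ad: "\<And>u v. u \<in> S \<Longrightarrow> v \<in> S \<Longrightarrow> br u v \<in> S"
    using sa unfolding lie_subalgebra_def by auto
  have "fin_dim scale L" using la unfolding lie_algebra_def by simp
  with S have bs: "ordered_basis scale (some_basis scale S) S" (is "ordered_basis scale ?bs S")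
    by (rule some_basis_ordered_basis)
  have ind: "independent (set ?bs)" and bsS: "set ?bs \<subseteq> S" and sp: "span (set ?bs) = S"
    using bs unfolding ordered_basis_def by (auto intro: span_base)
  have "x \<in> L" "y \<in> L" "set ?bs \<subseteq> L" using x y bsS S(2) by auto
  moreover have "br x v \<in> span (set ?bs) \<and> br y v \<in> span (set ?bs)" if "v \<in> set ?bs" for v
    using that x y bsS sp ad by auto
  ultimately have "\<exists>p. \<forall>t. coeff (char_poly (coord_matrix scale ?bs ?bs ?bs (br ((1 - t) *s x + t *s y)))) k = poly p t"
    by (intro coeff_char_poly_ad_line[OF la ind]) simp_all
  then obtain p where p: "\<forall>t. coeff (char_poly (coord_matrix scale ?bs ?bs ?bs (br ((1 - t) *s x + t *s y)))) k = poly p t" ..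
  have line: "(1 - t) *s x + t *s y \<in> S" for t
    using S x y by (intro subspace_add subspace_scale) auto
  have "coeff (chi_ad scale br S ((1 - t) *s x + t *s y)) k = poly p t" for t
    using chi_ad_eq_coord_matrix[OF la sa bs line] p by simp
  then show ?thesis by blast
qed

lemma chi_ad_factorization:
  assumes la: "lie_algebra scale br L" and sa: "lie_subalgebra scale br S L" and x: "x \<in> S"
  shows "chi_ad scale br L x = chi_ad scale br S x * chi_ad_quotient scale br L S x"
proof -
  have S: "subspace S" "S \<subseteq> L" and ad: "br x ` S \<subseteq> S"
    using sa x unfolding lie_subalgebra_def by auto
  have L: "subspace L" "fin_dim scale L" using la unfolding lie_algebra_def by auto
  define bs where "bs = some_basis scale S"
  define es where "es = complement_basis scale bs L"
  have bs: "ordered_basis scale bs S"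
    unfolding bs_def by (rule some_basis_ordered_basis[OF S L(2)])
  then have c: "ordered_basis scale (bs @ es) L"
    unfolding es_def using S(2) L by (rule ordered_basis_complement_basis)
  have "chi_ad scale br L x = char_poly (coord_matrix scale (bs @ es) (bs @ es) (bs @ es) (br x))"
    using chi_ad_eq_coord_matrix[OF la lie_subalgebra_refl[OF la] c] x S(2) by auto
  also have "\<dots> = chi_ad scale br S x * char_poly (coord_matrix scale (bs @ es) es es (br x))"
    using char_poly_coord_matrix_invariant_subspace[OF c bs ad] chi_ad_eq_coord_matrix[OF la sa bs x] by simp
  finally show ?thesis unfolding chi_ad_quotient_def bs_def es_def Let_def .
qed

lemma coeff_chi_ad_quotient_line:
  assumes la: "lie_algebra scale br L" and sa: "lie_subalgebra scale br S L" and x: "x \<in> S" and y: "y \<in> S"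
  shows "\<exists>p. \<forall>t. coeff (chi_ad_quotient scale br L S ((1 - t) *s x + t *s y)) k = poly p t"
proof -
  have S: "subspace S" "S \<subseteq> L" using sa unfolding lie_subalgebra_def by auto
  have L: "subspace L" "fin_dim scale L" and adL: "\<And>u v. u \<in> L \<Longrightarrow> v \<in> L \<Longrightarrow> br u v \<in> L"
    using la unfolding lie_algebra_def by auto
  define bs where "bs = some_basis scale S"
  define es where "es = complement_basis scale bs L"
  have "ordered_basis scale bs S"
    unfolding bs_def by (rule some_basis_ordered_basis[OF S L(2)])
  then have "ordered_basis scale (bs @ es) L"
    unfolding es_def using S(2) L by (rule ordered_basis_complement_basis)
  then have ind: "independent (set (bs @ es))" and sp: "span (set (bs @ es)) = L" and esL: "set es \<subseteq> L"
    unfolding ordered_basis_def by (auto intro: span_base)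
  have xy: "x \<in> L" "y \<in> L" using x y S(2) by auto
  moreover have "br x v \<in> span (set (bs @ es)) \<and> br y v \<in> span (set (bs @ es))" if "v \<in> set es" for v
    using that esL sp adL xy by auto
  ultimately have "\<exists>p. \<forall>t. coeff (char_poly (coord_matrix scale (bs @ es) es es (br ((1 - t) *s x + t *s y)))) k = poly p t"
    using esL by (intro coeff_char_poly_ad_line[OF la ind]) simp_all
  then show ?thesis unfolding chi_ad_quotient_def bs_def es_def Let_def .
qed

lemma order_chi_ad_factorization:
  assumes "lie_algebra scale br L" "lie_subalgebra scale br S L" "x \<in> S"
  shows "order 0 (chi_ad scale br L x) =
    order 0 (chi_ad scale br S x) + order 0 (chi_ad_quotient scale br L S x)"
  using chi_ad_factorization[OF assms] chi_ad_nonzero[of scale br L x] by (simp add: order_mult)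

lemma chi_ad_quotient_nonzero:
  assumes "lie_algebra scale br L" "lie_subalgebra scale br S L" "x \<in> S"
  shows "chi_ad_quotient scale br L S x \<noteq> 0"
  using chi_ad_factorization[OF assms] chi_ad_nonzero[of scale br L x] by auto

lemma regular_element_of_subalgebra:
  assumes inf: "infinite (UNIV :: 'a set)" and la: "lie_algebra scale br L"
    and reg: "regular_lie_algebra scale br L" and sa: "lie_subalgebra scale br S L"
    and y: "y \<in> S" "y \<noteq> 0"
  shows "regular_element scale br S y"
proof (rule ccontr)
  assume nreg: "\<not> regular_element scale br S y"
  have S: "subspace S" "S \<subseteq> L" using sa unfolding lie_subalgebra_def by auto
  let ?q = "chi_ad_quotient scale br L S"
  define s where "s = lie_rank scale br S"
  define b where "b = order 0 (?q y)"
  obtain x where x: "x \<in> S" "order 0 (chi_ad scale br S x) = s"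
    using lie_rank_attained[OF y(1)] unfolding s_def by blast
  have "s \<le> order 0 (chi_ad scale br S y)"
    unfolding s_def by (rule lie_rank_le_order[OF y(1)])
  moreover have "order 0 (chi_ad scale br S y) \<noteq> s"
    using nreg by (simp add: regular_element_iff_order[OF y(1)] s_def)
  moreover have "order 0 (chi_ad scale br L y) = lie_rank scale br L"
    using reg y S(2) by (auto simp: regular_lie_algebra_def regular_element_iff_order)
  ultimately have s_b: "s + b < lie_rank scale br L"
    using order_chi_ad_factorization[OF la sa y(1)] unfolding b_def by simp
  obtain pS where pS: "\<forall>t. coeff (chi_ad scale br S ((1 - t) *s x + t *s y)) s = poly pS t"
    using coeff_chi_ad_line[OF la sa x(1) y(1)] by blast
  obtain pq where pq: "\<forall>t. coeff (?q ((1 - t) *s x + t *s y)) b = poly pq t"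
    using coeff_chi_ad_quotient_line[OF la sa x(1) y(1)] by blast
  have "poly pS 0 \<noteq> 0"
    using pS[rule_format, of 0] x coeff_order_0_nonzero[OF chi_ad_nonzero[of scale br S x]] by simp
  moreover have "poly pq 1 \<noteq> 0"
    using pq[rule_format, of 1] coeff_order_0_nonzero[OF chi_ad_quotient_nonzero[OF la sa y(1)]]
    unfolding b_def by simp
  ultimately obtain t where t: "poly pS t \<noteq> 0" "poly pq t \<noteq> 0"
    using ex_common_nonroot[OF inf] by blast
  define z where "z = (1 - t) *s x + t *s y"
  have z: "z \<in> S" unfolding z_def using S(1) x(1) y(1) by (intro subspace_add subspace_scale) auto
  have "order 0 (chi_ad scale br S z) \<le> s" "order 0 (?q z) \<le> b"
    using t pS pq unfolding z_def by (auto intro: order_0_le_coeff_nonzero)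
  then have "order 0 (chi_ad scale br L z) < lie_rank scale br L"
    using order_chi_ad_factorization[OF la sa z] s_b by simp
  moreover have "lie_rank scale br L \<le> order 0 (chi_ad scale br L z)"
    using z S(2) by (intro lie_rank_le_order) auto
  ultimately show False by simp
qed

end

theorem lemma2:
  fixes scale :: "'k::field \<Rightarrow> 'v::ab_group_add \<Rightarrow> 'v"
    and br :: "'v \<Rightarrow> 'v \<Rightarrow> 'v"
    and L S :: "'v set"
  assumes "infinite (UNIV :: 'k set)"
    and "vector_space scale"
    and "lie_algebra scale br L"
    and "regular_lie_algebra scale br L"
    and "lie_subalgebra scale br S L"
  shows "regular_lie_algebra scale br S"
  unfolding regular_lie_algebra_def
  using vector_space.regular_element_of_subalgebra[OF assms(2,1,3-5)] by blast

end
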